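(* Let $(L,[\cdot,\cdot],\cdot,\alpha)$ be a multiplicative Hom-post-Lie algebra, let $(M_i,\diamond_i,\bullet_i,\alpha_{M_i})$, $i=1,2$, be two modules over $L$, and let $k$ be a non-negative integer. On $M_1\otimes M_2$ define $\alpha_M(m_1\otimes m_2)=\alpha_{M_1}(m_1)\otimes\alpha_{M_2}(m_2)$, $x\diamond(m_1\otimes m_2)=(\alpha^k(x)\diamond_1 m_1)\otimes\alpha_{M_2}(m_2)+\alpha_{M_1}(m_1)\otimes(\alpha^k(x)\diamond_2 m_2)$, $x\bullet(m_1\otimes m_2)=(\alpha^k(x)\bullet_1 m_1)\otimes\alpha_{M_2}(m_2)+\alpha_{M_1}(m_1)\otimes(\alpha^k(x)\bullet_2 m_2)$. Then $(M_1\otimes M_2,\diamond,\bullet,\alpha_M)$ is a module over $L$.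
   Context: All vector spaces are over a field $\mathbb{K}$ of characteristic $\neq 2$. A Hom-Lie algebra is $(L,[\cdot,\cdot],\alpha)$ with $[\cdot,\cdot]$ bilinear skew-symmetric, $\alpha$ linear, and $[\alpha(x),[y,z]]+[\alpha(y),[z,x]]+[\alpha(z),[x,y]]=0$. A Hom-post-Lie algebra $(L,[\cdot,\cdot],\cdot,\alpha)$ is a Hom-Lie algebra with bilinear $\cdot$ such that $\alpha(z)\cdot[x,y]-[z\cdot x,\alpha(y)]-[\alpha(x),z\cdot y]=0$ and $\alpha(z)\cdot(y\cdot x)-\alpha(y)\cdot(z\cdot x)+(y\cdot z)\cdot\alpha(x)-(z\cdot y)\cdot\alpha(x)+[y,z]\cdot\alpha(x)=0$ for all $x,y,z$; it is multiplicative if $\alpha([x,y])=[\alpha(x),\alpha(y)]$ and $\alpha(x\cdot y)=\alpha(x)\cdot\alpha(y)$. A module over $L$ is a vector space $M$ with linear $\alpha_M$ and bilinear $\diamond,\bullet:L\otimes M\to M$ such that for all $x,y\in L,m\in M$: (i) $\alpha_M(x\diamond m)=\alpha(x)\diamond\alpha_M(m)$, $\alpha_M(x\bullet m)=\alpha(x)\bullet\alpha_M(m)$; (ii) $[x,y]\diamond\alpha_M(m)=\alpha(x)\diamond(y\diamond m)-\alpha(y)\diamond(x\diamond m)$; (iii) $(x\cdot y)\diamond\alpha_M(m)=\alpha(x)\bullet(y\diamond m)-\alpha(y)\diamond(x\bullet m)$; (iv) $[x,y]\bullet\alpha_M(m)=\alpha(x)\bullet(y\bullet m)-\alpha(y)\bullet(x\bullet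 m)-(x\cdot y)\bullet\alpha_M(m)+(y\cdot x)\bullet\alpha_M(m)$. *)

theory Defs
  imports Main HOL.Vector_Spaces
begin

definition bilin :: "('k::field \<Rightarrow> 'a::ab_group_add \<Rightarrow> 'a) \<Rightarrow> ('k \<Rightarrow> 'b::ab_group_add \<Rightarrow> 'b)
    \<Rightarrow> ('k \<Rightarrow> 'c::ab_group_add \<Rightarrow> 'c) \<Rightarrow> ('a \<Rightarrow> 'b \<Rightarrow> 'c) \<Rightarrow> bool" where
  "bilin s1 s2 s3 f \<longleftrightarrow>
     (\<forall>x. Vector_Spaces.linear s2 s3 (f x)) \<and> (\<forall>y. Vector_Spaces.linear s1 s3 (\<lambda>x. f x y))"

definition hom_lie_algebra ::
  "('k::field \<Rightarrow> 'l::ab_group_add \<Rightarrow> 'l) \<Rightarrow> ('l \<Rightarrow> 'l \<Rightarrow> 'l) \<Rightarrow> ('l \<Rightarrow> 'l) \<Rightarrow> bool" where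
  "hom_lie_algebra sL br \<alpha> \<longleftrightarrow>
     vector_space sL \<and> bilin sL sL sL br \<and> (\<forall>x y. br x y = - br y x) \<and>
     Vector_Spaces.linear sL sL \<alpha> \<and>
     (\<forall>x y z. br (\<alpha> x) (br y z) + br (\<alpha> y) (br z x) + br (\<alpha> z) (br x y) = 0)"

definition hom_post_lie_algebra ::
  "('k::field \<Rightarrow> 'l::ab_group_add \<Rightarrow> 'l) \<Rightarrow> ('l \<Rightarrow> 'l \<Rightarrow> 'l) \<Rightarrow> ('l \<Rightarrow> 'l \<Rightarrow> 'l) \<Rightarrow> ('l \<Rightarrow> 'l) \<Rightarrow> bool" where
  "hom_post_lie_algebra sL br dot \<alpha> \<longleftrightarrow>
     hom_lie_algebra sL br \<alpha> \<and> bilin sL sL sL dot \<and>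
     (\<forall>x y z. dot (\<alpha> z) (br x y) - br (dot z x) (\<alpha> y) - br (\<alpha> x) (dot z y) = 0) \<and>
     (\<forall>x y z. dot (\<alpha> z) (dot y x) - dot (\<alpha> y) (dot z x) + dot (dot y z) (\<alpha> x)
               - dot (dot z y) (\<alpha> x) + dot (br y z) (\<alpha> x) = 0)"

definition multiplicative ::
  "('l \<Rightarrow> 'l \<Rightarrow> 'l) \<Rightarrow> ('l \<Rightarrow> 'l \<Rightarrow> 'l) \<Rightarrow> ('l \<Rightarrow> 'l) \<Rightarrow> bool" where
  "multiplicative br dot \<alpha> \<longleftrightarrow>
     (\<forall>x y. \<alpha> (br x y) = br (\<alpha> x) (\<alpha> y)) \<and> (\<forall>x y. \<alpha> (dot x y) = dot (\<alpha> x) (\<alpha> y))"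

definition hpl_module ::
  "('k::field \<Rightarrow> 'l::ab_group_add \<Rightarrow> 'l) \<Rightarrow> ('l \<Rightarrow> 'l \<Rightarrow> 'l) \<Rightarrow> ('l \<Rightarrow> 'l \<Rightarrow> 'l) \<Rightarrow> ('l \<Rightarrow> 'l)
    \<Rightarrow> ('k \<Rightarrow> 'm::ab_group_add \<Rightarrow> 'm) \<Rightarrow> ('l \<Rightarrow> 'm \<Rightarrow> 'm) \<Rightarrow> ('l \<Rightarrow> 'm \<Rightarrow> 'm) \<Rightarrow> ('m \<Rightarrow> 'm) \<Rightarrow> bool" where
  "hpl_module sL br dot \<alpha> sM dm bm \<alpha>M \<longleftrightarrow>
     vector_space sM \<and> Vector_Spaces.linear sM sM \<alpha>M \<and>
     bilin sL sM sM dm \<and> bilin sL sM sM bm \<and>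
     (\<forall>x m. \<alpha>M (dm x m) = dm (\<alpha> x) (\<alpha>M m)) \<and>
     (\<forall>x m. \<alpha>M (bm x m) = bm (\<alpha> x) (\<alpha>M m)) \<and>
     (\<forall>x y m. dm (br x y) (\<alpha>M m) = dm (\<alpha> x) (dm y m) - dm (\<alpha> y) (dm x m)) \<and>
     (\<forall>x y m. dm (dot x y) (\<alpha>M m) = bm (\<alpha> x) (dm y m) - dm (\<alpha> y) (bm x m)) \<and>
     (\<forall>x y m. bm (br x y) (\<alpha>M m) = bm (\<alpha> x) (bm y m) - bm (\<alpha> y) (bm x m)
                 - bm (dot x y) (\<alpha>M m) + bm (dot y x) (\<alpha>M m))"

(* Over a field this is equivalent to the
   usual universal property. *)
definition is_tensor_product ::
  "('k::field \<Rightarrow> 'a::ab_group_add \<Rightarrow> 'a) \<Rightarrow> ('k \<Rightarrow> 'b::ab_group_add \<Rightarrow> 'b)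
    \<Rightarrow> ('k \<Rightarrow> 't::ab_group_add \<Rightarrow> 't) \<Rightarrow> ('a \<Rightarrow> 'b \<Rightarrow> 't) \<Rightarrow> bool" where
  "is_tensor_product s1 s2 sT tp \<longleftrightarrow>
     vector_space s1 \<and> vector_space s2 \<and> vector_space sT \<and>
     bilin s1 s2 sT tp \<and>
     module.span sT (range (\<lambda>(a, b). tp a b)) = UNIV \<and>
     (\<forall>f. bilin s1 s2 (*) f \<longrightarrow>
        (\<exists>g. Vector_Spaces.linear sT (*) g \<and> (\<forall>a b. g (tp a b) = f a b)))"

end

theory Submission
  imports Defs
begin

(* Each module axiom for M1 \<otimes> M2 compares two maps that are linear in the tensor argument,
   so it suffices to check it on pure tensors m1 \<otimes> m2, which span.  There, because \<alpha>^k is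
   multiplicative and commutes with \<alpha>, the axiom splits into the corresponding axioms of M1
   and of M2 in one factor each, while the mixed terms, in which one factor is acted on by x and
   the other by y, cancel in pairs. *)

lemma bilin_add_left: "bilin s1 s2 s3 f \<Longrightarrow> f (a + a') b = f a b + f a' b"
  unfolding bilin_def linear_iff by blast

lemma bilin_add_right: "bilin s1 s2 s3 f \<Longrightarrow> f a (b + b') = f a b + f a b'"
  unfolding bilin_def linear_iff by blast

lemma bilin_diff_left: "bilin s1 s2 s3 f \<Longrightarrow> f (a - a') b = f a b - f a' b"
  unfolding bilin_def linear_iff_module_hom using module_hom.diff[of s1 s3 "\<lambda>a. f a b"] by blast

lemma bilin_diff_right: "bilin s1 s2 s3 f \<Longrightarrow> f a (b - b') = f a b - f a b'"
  unfolding bilin_def linear_iff_module_hom using module_hom.diff[of s2 s3 "f a"] by blast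

lemma tensor_product_linear_eq:
  assumes T: "is_tensor_product s1 s2 sT tp"
    and f: "Vector_Spaces.linear sT s f" and g: "Vector_Spaces.linear sT s g"
    and eq: "\<And>a b. f (tp a b) = g (tp a b)"
  shows "f = g"
proof
  fix m
  interpret vector_space_pair sT s
    using f by (simp add: linear_iff vector_space_pair_def)
  have m: "m \<in> module.span sT (range (\<lambda>(a, b). tp a b))"
    using T unfolding is_tensor_product_def by blast
  show "f m = g m"
    by (rule linear_eq_on_span[OF f g _ m]) (auto simp: eq)
qed

lemma funpow_hom:
  assumes "\<And>x y. f (h x y) = h (f x) (f y)"
  shows "(f ^^ k) (h x y) = h ((f ^^ k) x) ((f ^^ k) y)"
  by (induction k) (simp_all add: assms)

locale tensor_module =
  fixes sL :: "'k::field \<Rightarrow> 'l::ab_group_add \<Rightarrow> 'l"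
    and br dot :: "'l \<Rightarrow> 'l \<Rightarrow> 'l" and \<alpha> :: "'l \<Rightarrow> 'l"
    and s1 :: "'k \<Rightarrow> 'm1::ab_group_add \<Rightarrow> 'm1"
    and d1 b1 :: "'l \<Rightarrow> 'm1 \<Rightarrow> 'm1" and \<alpha>1 :: "'m1 \<Rightarrow> 'm1"
    and s2 :: "'k \<Rightarrow> 'm2::ab_group_add \<Rightarrow> 'm2"
    and d2 b2 :: "'l \<Rightarrow> 'm2 \<Rightarrow> 'm2" and \<alpha>2 :: "'m2 \<Rightarrow> 'm2"
    and sT :: "'k \<Rightarrow> 't::ab_group_add \<Rightarrow> 't" and tp :: "'m1 \<Rightarrow> 'm2 \<Rightarrow> 't"
    and \<alpha>M :: "'t \<Rightarrow> 't" and dM bM :: "'l \<Rightarrow> 't \<Rightarrow> 't"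
    and k :: nat
  assumes mult: "multiplicative br dot \<alpha>"
    and M1: "hpl_module sL br dot \<alpha> s1 d1 b1 \<alpha>1"
    and M2: "hpl_module sL br dot \<alpha> s2 d2 b2 \<alpha>2"
    and T: "is_tensor_product s1 s2 sT tp"
    and \<alpha>M_linear: "Vector_Spaces.linear sT sT \<alpha>M"
    and \<alpha>M_tp: "\<And>m1 m2. \<alpha>M (tp m1 m2) = tp (\<alpha>1 m1) (\<alpha>2 m2)"
    and dM_bilin: "bilin sL sT sT dM"
    and dM_tp: "\<And>x m1 m2. dM x (tp m1 m2) =
                   tp (d1 ((\<alpha> ^^ k) x) m1) (\<alpha>2 m2) + tp (\<alpha>1 m1) (d2 ((\<alpha> ^^ k) x) m2)"
    and bM_bilin: "bilin sL sT sT bM"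
    and bM_tp: "\<And>x m1 m2. bM x (tp m1 m2) =
                   tp (b1 ((\<alpha> ^^ k) x) m1) (\<alpha>2 m2) + tp (\<alpha>1 m1) (b2 ((\<alpha> ^^ k) x) m2)"
begin

sublocale T: vector_space_pair sT sT
  using T unfolding is_tensor_product_def vector_space_pair_def by blast

lemma dM_linear: "Vector_Spaces.linear sT sT (dM x)"
  using dM_bilin unfolding bilin_def by blast

lemma bM_linear: "Vector_Spaces.linear sT sT (bM x)"
  using bM_bilin unfolding bilin_def by blast

lemma tp_bilin: "bilin s1 s2 sT tp"
  using T unfolding is_tensor_product_def by blast

lemma funpow_\<alpha>_br: "(\<alpha> ^^ k) (br x y) = br ((\<alpha> ^^ k) x) ((\<alpha> ^^ k) y)"
  using mult by (intro funpow_hom) (simp add: multiplicative_def)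

lemma funpow_\<alpha>_dot: "(\<alpha> ^^ k) (dot x y) = dot ((\<alpha> ^^ k) x) ((\<alpha> ^^ k) y)"
  using mult by (intro funpow_hom) (simp add: multiplicative_def)

lemmas factor_axioms = M1[unfolded hpl_module_def] M2[unfolded hpl_module_def]

lemmas tensor_simps = \<alpha>M_tp dM_tp bM_tp
  bilin_add_right[OF dM_bilin] bilin_add_right[OF bM_bilin] T.linear_add[OF \<alpha>M_linear]
  bilin_add_left[OF tp_bilin] bilin_add_right[OF tp_bilin]
  bilin_diff_left[OF tp_bilin] bilin_diff_right[OF tp_bilin]
  funpow_\<alpha>_br funpow_\<alpha>_dot funpow_swap1

lemma eq_on_pure_tensors:
  "Vector_Spaces.linear sT sT f \<Longrightarrow> Vector_Spaces.linear sT sT g \<Longrightarrow>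
    (\<And>a b. f (tp a b) = g (tp a b)) \<Longrightarrow> f = g"
  by (rule tensor_product_linear_eq[OF T])

lemma linear_endo_compose:
  "Vector_Spaces.linear sT sT f \<Longrightarrow> Vector_Spaces.linear sT sT g \<Longrightarrow>
    Vector_Spaces.linear sT sT (\<lambda>m. f (g m))"
  using Vector_Spaces.linear_compose[of sT sT g sT f] by (simp add: comp_def)

(* The outer map is instantiated so that the conclusion is a higher-order pattern. *)
lemmas linear_intros = dM_linear bM_linear \<alpha>M_linear T.linear_compose_sub T.linear_compose_add
  linear_endo_compose[OF dM_linear] linear_endo_compose[OF bM_linear] linear_endo_compose[OF \<alpha>M_linear]

lemma \<alpha>M_dM: "(\<lambda>m. \<alpha>M (dM x m)) = (\<lambda>m. dM (\<alpha> x) (\<alpha>M m))"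
  by (rule eq_on_pure_tensors, (intro linear_intros)+) (simp add: tensor_simps factor_axioms)

lemma \<alpha>M_bM: "(\<lambda>m. \<alpha>M (bM x m)) = (\<lambda>m. bM (\<alpha> x) (\<alpha>M m))"
  by (rule eq_on_pure_tensors, (intro linear_intros)+) (simp add: tensor_simps factor_axioms)

lemma dM_br: "(\<lambda>m. dM (br x y) (\<alpha>M m)) = (\<lambda>m. dM (\<alpha> x) (dM y m) - dM (\<alpha> y) (dM x m))"
  by (rule eq_on_pure_tensors, (intro linear_intros)+)
    (simp add: tensor_simps factor_axioms algebra_simps)

lemma dM_dot: "(\<lambda>m. dM (dot x y) (\<alpha>M m)) = (\<lambda>m. bM (\<alpha> x) (dM y m) - dM (\<alpha> y) (bM x m))"
  by (rule eq_on_pure_tensors, (intro linear_intros)+)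
    (simp add: tensor_simps factor_axioms algebra_simps)

lemma bM_br:
  "(\<lambda>m. bM (br x y) (\<alpha>M m)) = (\<lambda>m. bM (\<alpha> x) (bM y m) - bM (\<alpha> y) (bM x m)
     - bM (dot x y) (\<alpha>M m) + bM (dot y x) (\<alpha>M m))"
  by (rule eq_on_pure_tensors, (intro linear_intros)+)
    (simp add: tensor_simps factor_axioms algebra_simps)

theorem hpl_module_tensor: "hpl_module sL br dot \<alpha> sT dM bM \<alpha>M"
  unfolding hpl_module_def
  using T.vs1.vector_space_axioms \<alpha>M_linear dM_bilin bM_bilin \<alpha>M_dM \<alpha>M_bM dM_br dM_dot bM_br
  by (simp add: fun_eq_iff)

end

theorem mainTheorem3:
  fixes sL :: "'k::field \<Rightarrow> 'l::ab_group_add \<Rightarrow> 'l"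
    and br dot :: "'l \<Rightarrow> 'l \<Rightarrow> 'l" and \<alpha> :: "'l \<Rightarrow> 'l"
    and s1 :: "'k \<Rightarrow> 'm1::ab_group_add \<Rightarrow> 'm1"
    and d1 b1 :: "'l \<Rightarrow> 'm1 \<Rightarrow> 'm1" and \<alpha>1 :: "'m1 \<Rightarrow> 'm1"
    and s2 :: "'k \<Rightarrow> 'm2::ab_group_add \<Rightarrow> 'm2"
    and d2 b2 :: "'l \<Rightarrow> 'm2 \<Rightarrow> 'm2" and \<alpha>2 :: "'m2 \<Rightarrow> 'm2"
    and sT :: "'k \<Rightarrow> 't::ab_group_add \<Rightarrow> 't" and tp :: "'m1 \<Rightarrow> 'm2 \<Rightarrow> 't"
    and \<alpha>M :: "'t \<Rightarrow> 't" and dM bM :: "'l \<Rightarrow> 't \<Rightarrow> 't"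
    and k :: nat
  assumes char: "(2::'k) \<noteq> 0"
    and L: "hom_post_lie_algebra sL br dot \<alpha>"
    and mult: "multiplicative br dot \<alpha>"
    and M1: "hpl_module sL br dot \<alpha> s1 d1 b1 \<alpha>1"
    and M2: "hpl_module sL br dot \<alpha> s2 d2 b2 \<alpha>2"
    and T: "is_tensor_product s1 s2 sT tp"
    and \<alpha>M_lin: "Vector_Spaces.linear sT sT \<alpha>M"
    and \<alpha>M_def: "\<And>m1 m2. \<alpha>M (tp m1 m2) = tp (\<alpha>1 m1) (\<alpha>2 m2)"
    and dM_bilin: "bilin sL sT sT dM"
    and dM_def: "\<And>x m1 m2. dM x (tp m1 m2) =
                   tp (d1 ((\<alpha> ^^ k) x) m1) (\<alpha>2 m2) + tp (\<alpha>1 m1) (d2 ((\<alpha> ^^ k) x) m2)"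
    and bM_bilin: "bilin sL sT sT bM"
    and bM_def: "\<And>x m1 m2. bM x (tp m1 m2) =
                   tp (b1 ((\<alpha> ^^ k) x) m1) (\<alpha>2 m2) + tp (\<alpha>1 m1) (b2 ((\<alpha> ^^ k) x) m2)"
  shows "hpl_module sL br dot \<alpha> sT dM bM \<alpha>M"
  by (rule tensor_module.hpl_module_tensor, rule tensor_module.intro)
    (fact mult M1 M2 T \<alpha>M_lin \<alpha>M_def dM_bilin dM_def bM_bilin bM_def)+

end
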